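(* Assume the standing assumptions (P1)–(P6) described in the context. Let $(f_0,t_0)\in\mathrm{Dom}\,\mathcal P$ with $f_0\in F_+$, let $T\in(t_0,+\infty]$, and let $\varphi_{ap}\in C([t_0,T),F_+)\cap C^1([t_0,T),F_-)$ with graph contained in $\mathrm{Dom}\,\mathcal P$. Put $d(\varphi_{ap}):=\varphi_{ap}(t_0)-f_0$ and $e(\varphi_{ap})(t):=\dot\varphi_{ap}(t)-\mathcal A\varphi_{ap}(t)-\mathcal P(\varphi_{ap}(t),t)$. Then: (i) $\varphi_{ap}\in C([t_0,T),F)$, and its integral error $E(\varphi_{ap})(t):=\varphi_{ap}(t)-e^{(t-t_0)\mathcal A}f_0-\int_{t_0}^te^{(t-s)\mathcal A}\mathcal P(\varphi_{ap}(s),s)\,ds$ satisfies $$E(\varphi_{ap})(t)=e^{(t-t_0)\mathcal A}d(\varphi_{ap})+\int_{t_0}^te^{(t-s)\mathcal A}e(\varphi_{ap})(s)\,ds\qquad(t\in[t_0,T)).$$ (ii) If $\delta\ge0$ with $\|d(\varphi_{ap})\|\le\delta$ and $\epsilon\in C([t_0,T),[0,+\infty))$ with $\|e(\varphi_{ap})(t)\|_-\le\epsilon(t)$ for all $t$, then $\|E(\varphi_{ap})(t)\|\le u(t-t_0)\delta+\int_{t_0}^tu_-(t-s)\epsilon(s)\,ds$ for all $t\in[t_0,T)$.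
   Context: All Banach spaces are over a common field ($\mathbb R$ or $\mathbb C$). For Banach spaces $X,Y$, $X\hookrightarrow Y$ means that $X$ is a dense linear subspace of $Y$ and the inclusion is continuous. Standing assumptions: (P1) $F_+,F,F_-$ are Banach spaces with norms $\|\cdot\|_+,\|\cdot\|,\|\cdot\|_-$ and $F_+\hookrightarrow F\hookrightarrow F_-$; $B(f_0,r):=\{f\in F:\|f-f_0\|<r\}$. (P2) $\mathcal A:F_+\to F_-$ is linear and on $F_+$ the norm $\|\cdot\|_+$ is equivalent to $f\mapsto\|f\|_-+\|\mathcal Af\|_-$. (P3) $\mathcal A$, viewed as a densely defined operator in $F_-$ with domain $F_+$, generates a strongly continuous semigroup $(e^{t\mathcal A})_{t\ge0}$ on $F_-$. (P4) $e^{t\mathcal A}(F)\subset F$ for $t\ge0$, $(f,t)\mapsto e^{t\mathcal A}f$ is continuous from $F\times[0,\infty)$ to $F$, and $u\in C([0,\infty),(0,\infty))$ satisfies $\|e^{t\mathcal A}f\|\le u(t)\|f\|$. (P5) $e^{t\mathcal A}(F_-)\subset F$ for $t>0$, $(f,t)\mapsto e^{t\mathcal A}f$ is continuous from $F_-\times(0,\infty)$ to $F$, and $u_-\in C((0,\infty),(0,\infty))$ satisfies $\|e^{t\mathcal A}f\|\le u_-(t)\|f\|_-$ for $t>0$, $f\in F_-$, with $u_-(t)=O(t^{-(1-\sigma)})$ as $t\to0^+$ for some $\sigma\in(0,1]$. (P6) $\mathcal P:\mathrm{Dom}\,\mathcal P\subset F\times\mathbb R\to F_-$; the domain is semi-open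 (for each $(f_0,t_0)\in\mathrm{Dom}\,\mathcal P$ there are $\delta,r\in(0,+\infty]$ with $B(f_0,r)\times[t_0,t_0+\delta)\subset\mathrm{Dom}\,\mathcal P$), and for every closed bounded $\mathcal C\subset F\times\mathbb R$ with $\mathcal C\subset\mathrm{Dom}\,\mathcal P$ there are $L,M\ge0$ with $\|\mathcal P(f,t)-\mathcal P(f',t')\|_-\le L\|f-f'\|+M|t-t'|$ on $\mathcal C$. The graph of $\varphi$ is $\{(\varphi(t),t)\}$. *)

theory Defs
  imports "HOL-Analysis.Analysis" "HOL-Library.Extended_Real"
begin

text \<open>Strongly continuous semigroup on a Banach space (values for t < 0 are irrelevant).\<close>
definition C0_semigroup :: "(real \<Rightarrow> 'm::banach \<Rightarrow> 'm) \<Rightarrow> bool" where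
  "C0_semigroup S \<longleftrightarrow>
     (\<forall>t\<ge>0. bounded_linear (S t)) \<and> S 0 = id \<and>
     (\<forall>s\<ge>0. \<forall>t\<ge>0. S (s + t) = S s \<circ> S t) \<and>
     (\<forall>x. continuous_on {0..} (\<lambda>t. S t x))"

definition generator_domain :: "(real \<Rightarrow> 'm::real_normed_vector \<Rightarrow> 'm) \<Rightarrow> 'm set" where
  "generator_domain S = {y. \<exists>l. ((\<lambda>h. (S h y - y) /\<^sub>R h) \<longlongrightarrow> l) (at_right 0)}"

text \<open>Types: 'p = F_+, 'f = F, 'm = F_-;
  i : F_+ \<rightarrow> F and j : F \<rightarrow> F_- are the inclusions; S t = e^{tA} on F_-;
  u, um = u_-, P the perturbation with domain DomP.\<close>
locale standing_assumptions =
  fixes i :: "'p::banach \<Rightarrow> 'f::banach"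
    and j :: "'f \<Rightarrow> 'm::banach"
    and A :: "'p \<Rightarrow> 'm"
    and S :: "real \<Rightarrow> 'm \<Rightarrow> 'm"
    and u :: "real \<Rightarrow> real"
    and um :: "real \<Rightarrow> real"
    and \<sigma> :: real
    and P :: "'f \<Rightarrow> real \<Rightarrow> 'm"
    and DomP :: "('f \<times> real) set"
  assumes P1_i: "bounded_linear i" "inj i" "closure (range i) = UNIV"
    and P1_j: "bounded_linear j" "inj j" "closure (range j) = UNIV"
    and P2_lin: "linear A"
    and P2_equiv: "\<exists>c>0. \<exists>C. \<forall>f. c * norm f \<le> norm (j (i f)) + norm (A f) \<and>
                              norm (j (i f)) + norm (A f) \<le> C * norm f"
    and P3_sg: "C0_semigroup S"
    and P3_dom: "generator_domain S = range (j \<circ> i)"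
    and P3_gen: "\<forall>f. ((\<lambda>h. (S h (j (i f)) - j (i f)) /\<^sub>R h) \<longlongrightarrow> A f) (at_right 0)"
    and P4_inv: "\<forall>t\<ge>0. \<forall>f. S t (j f) \<in> range j"
    and P4_cont: "continuous_on (UNIV \<times> {0..}) (\<lambda>(f, t). inv j (S t (j f)))"
    and P4_u: "continuous_on {0..} u" "\<forall>t\<ge>0. u t > 0"
    and P4_bound: "\<forall>t\<ge>0. \<forall>f. norm (inv j (S t (j f))) \<le> u t * norm f"
    and P5_inv: "\<forall>t>0. \<forall>g. S t g \<in> range j"
    and P5_cont: "continuous_on (UNIV \<times> {0<..}) (\<lambda>(g, t). inv j (S t g))"
    and P5_um: "continuous_on {0<..} um" "\<forall>t>0. um t > 0"
    and P5_bound: "\<forall>t>0. \<forall>g. norm (inv j (S t g)) \<le> um t * norm g"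
    and P5_sigma: "0 < \<sigma>" "\<sigma> \<le> 1"
    and P5_sing: "\<exists>C. eventually (\<lambda>t. um t \<le> C * t powr (\<sigma> - 1)) (at_right 0)"
    and P6_semiopen: "\<forall>(f0, t0) \<in> DomP. \<exists>\<delta>>0. \<exists>r>0. ball f0 r \<times> {t0..<t0 + \<delta>} \<subseteq> DomP"
    and P6_lip: "\<forall>C. closed C \<and> bounded C \<and> C \<subseteq> DomP \<longrightarrow>
                   (\<exists>L\<ge>0. \<exists>M\<ge>0. \<forall>(f, t) \<in> C. \<forall>(f', t') \<in> C.
                      norm (P f t - P f' t') \<le> L * norm (f - f') + M * \<bar>t - t'\<bar>)"

end

theory Submission
  imports Defs
begin

text \<open>For \<open>t0 < s < t\<close> the map \<open>s \<mapsto> e\<^bsup>(t-s)A\<^esup> \<phi>(s)\<close> is differentiable in \<open>F\<^sub>-\<close> with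
  derivative \<open>e\<^bsup>(t-s)A\<^esup> (\<phi>'(s) - A \<phi>(s))\<close>, so the fundamental theorem of calculus gives
  \<open>\<integral>\<^sub>t\<^sub>0\<^sup>t e\<^bsup>(t-s)A\<^esup> (\<phi>' - A \<phi>) = \<phi>(t) - e\<^bsup>(t-t0)A\<^esup> \<phi>(t0)\<close>; subtracting the integral
  of \<open>e\<^bsup>(t-s)A\<^esup> P(\<phi>(s), s)\<close> is identity (i). The integrands, read in \<open>F\<close>, are continuous on
  \<open>[t0, t)\<close> and dominated by \<open>u\<^sub>-(t - s) \<cdot> const = O((t - s)\<^bsup>\<sigma>-1\<^esup>)\<close>, which makes them integrable
  on \<open>[t0, t]\<close>. The estimate (ii) then follows from (i) with the bounds of (P4) and (P5).\<close>

lemma uniformly_continuous_on_integral_dominated: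
  fixes h :: "real \<Rightarrow> 'a::banach" and k :: "real \<Rightarrow> real"
  assumes hc: "continuous_on {a..<b} h" and ki: "k integrable_on {a..b}"
    and hk: "\<And>s. s \<in> {a..<b} \<Longrightarrow> norm (h s) \<le> k s"
  shows "uniformly_continuous_on {a..<b} (\<lambda>r. integral {a..r} h)"
proof -
  define G where "G = (\<lambda>r. integral {a..r} h)"
  define K where "K = (\<lambda>r. integral {a..r} k)"
  have K: "uniformly_continuous_on {a..b} K"
    unfolding K_def
    by (rule compact_uniformly_continuous[OF indefinite_integral_continuous_1[OF ki]]) simp
  have G_K: "dist (G y) (G x) \<le> dist (K y) (K x)" if "x \<in> {a..<b}" "y \<in> {a..<b}" "x \<le> y" for x y
  proof -
    have h_int: "h integrable_on {a..y}" "h integrable_on {x..y}"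
      by (rule integrable_continuous_real[OF continuous_on_subset[OF hc]], use that in auto)+
    have k_int: "k integrable_on {x..y}" "k integrable_on {a..y}"
      by (rule integrable_subinterval_real[OF ki], use that in auto)+
    have "G y = G x + integral {x..y} h"
      unfolding G_def
      by (rule Henstock_Kurzweil_Integration.integral_combine[symmetric])
         (use that h_int in auto)
    moreover have "K y = K x + integral {x..y} k"
      unfolding K_def using that k_int
      by (intro Henstock_Kurzweil_Integration.integral_combine[symmetric]) auto
    moreover have "norm (integral {x..y} h) \<le> integral {x..y} k"
      by (rule integral_norm_bound_integral[OF h_int(2) k_int(1)]) (use hk that in auto)
    ultimately show ?thesis by (simp add: dist_norm)
  qed
  show ?thesis
    unfolding uniformly_continuous_on_def G_def[symmetric]
  proof (intro allI impI)
    fix e :: real assume "e > 0"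
    then obtain d where "d > 0" and d: "\<forall>x\<in>{a..b}. \<forall>x'\<in>{a..b}. dist x' x < d \<longrightarrow> dist (K x') (K x) < e"
      using K unfolding uniformly_continuous_on_def by blast
    have "dist (G x') (G x) < e" if "x \<in> {a..<b}" "x' \<in> {a..<b}" "dist x' x < d" for x x'
      using G_K[of x x'] G_K[of x' x] d that by (cases "x \<le> x'") (fastforce simp: dist_commute)+
    with \<open>d > 0\<close> show "\<exists>d>0. \<forall>x\<in>{a..<b}. \<forall>x'\<in>{a..<b}. dist x' x < d \<longrightarrow> dist (G x') (G x) < e"
      by blast
  qed
qed

text \<open>The indefinite integral is uniformly continuous, hence extends continuously to the right
  endpoint, and this extension is a primitive.\<close>
lemma integrable_on_Icc_if_continuous_on_Ico_dominated:
  fixes h :: "real \<Rightarrow> 'a::banach" and k :: "real \<Rightarrow> real"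
  assumes "a \<le> b" and hc: "continuous_on {a..<b} h" and ki: "k integrable_on {a..b}"
    and hk: "\<And>s. s \<in> {a..<b} \<Longrightarrow> norm (h s) \<le> k s"
  shows "h integrable_on {a..b}"
proof (cases "a = b")
  case True
  then show ?thesis using integrable_on_refl[of h b] by simp
next
  case False
  with \<open>a \<le> b\<close> have "a < b" by simp
  obtain g where gu: "uniformly_continuous_on (closure {a..<b}) g"
    and G_g: "\<And>x. x \<in> {a..<b} \<Longrightarrow> integral {a..x} h = g x"
    using uniformly_continuous_on_extension_on_closure[OF
        uniformly_continuous_on_integral_dominated[OF hc ki hk]] by metis
  have "continuous_on {a..b} g"
    using uniformly_continuous_imp_continuous[OF gu] \<open>a < b\<close> by simp
  then have "(h has_integral (g b - g a)) {a..b}"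
  proof (rule fundamental_theorem_of_calculus_interior[OF \<open>a \<le> b\<close>])
    fix x assume x: "x \<in> {a<..<b}"
    define c where "c = (x + b) / 2"
    have xc: "a < x" "x < c" "c < b" using x unfolding c_def by auto
    have "continuous_on {a..c} h" by (rule continuous_on_subset[OF hc]) (use xc in auto)
    then have "((\<lambda>u. integral {a..u} h) has_vector_derivative h x) (at x within {a..c})"
      by (rule integral_has_vector_derivative) (use xc in auto)
    then have "((\<lambda>u. integral {a..u} h) has_vector_derivative h x) (at x)"
      using xc by (simp add: at_within_Icc_at)
    then show "(g has_vector_derivative h x) (at x)"
      by (rule has_vector_derivative_transform_within_open[of _ _ _ "{a<..<b}"]) (use x G_g in auto)
  qed
  then show ?thesis by (rule has_integral_integrable)
qed

lemma integrable_on_powr_diff: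
  fixes \<sigma> a b :: real
  assumes "\<sigma> > 0" "a \<le> b"
  shows "(\<lambda>s. (b - s) powr (\<sigma> - 1)) integrable_on {a..b}"
proof -
  define F where "F = (\<lambda>s. - ((b - s) powr \<sigma>) / \<sigma>)"
  have "((\<lambda>s. (b - s) powr (\<sigma> - 1)) has_integral (F b - F a)) {a..b}"
  proof (rule fundamental_theorem_of_calculus_interior[OF \<open>a \<le> b\<close>])
    show "continuous_on {a..b} F"
      unfolding F_def by (intro continuous_intros continuous_on_powr') (use assms in auto)
    fix x assume "x \<in> {a<..<b}"
    then show "(F has_vector_derivative (b - x) powr (\<sigma> - 1)) (at x)"
      using assms unfolding F_def has_real_derivative_iff_has_vector_derivative[symmetric]
      by (auto intro!: derivative_eq_intros simp: field_simps)
  qed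
  then show ?thesis by (rule has_integral_integrable)
qed

lemma has_vector_derivative_iff_difference_quotient:
  fixes f :: "real \<Rightarrow> 'a::real_normed_vector"
  shows "(f has_vector_derivative D) (at x within S) \<longleftrightarrow>
    ((\<lambda>y. (f y - f x) /\<^sub>R (y - x)) \<longlongrightarrow> D) (at x within S)"
proof -
  have "norm ((f y - f x) /\<^sub>R (y - x) - D) = norm (((f y - f x) - (y - x) *\<^sub>R D) /\<^sub>R norm (y - x))"
    if "y \<noteq> x" for y
  proof -
    have "(f y - f x) /\<^sub>R (y - x) - D = inverse (y - x) *\<^sub>R ((f y - f x) - (y - x) *\<^sub>R D)"
      using that by (simp add: scaleR_diff_right)
    then show ?thesis by (simp add: divide_simps)
  qed
  then have ev: "\<forall>\<^sub>F y in at x within S. norm (((f y - f x) - (y - x) *\<^sub>R D) /\<^sub>R norm (y - x)) =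
      norm ((f y - f x) /\<^sub>R (y - x) - D)"
    unfolding eventually_at_filter by (auto intro: always_eventually)
  have "(f has_vector_derivative D) (at x within S) \<longleftrightarrow>
      ((\<lambda>y. ((f y - f x) - (y - x) *\<^sub>R D) /\<^sub>R norm (y - x)) \<longlongrightarrow> 0) (at x within S)"
    unfolding has_vector_derivative_def has_derivative_at_within by (simp add: bounded_linear_scaleR_left)
  also have "\<dots> \<longleftrightarrow> ((\<lambda>y. norm ((f y - f x) /\<^sub>R (y - x) - D)) \<longlongrightarrow> 0) (at x within S)"
    by (subst tendsto_norm_zero_iff[symmetric], rule tendsto_cong[OF ev])
  also have "\<dots> \<longleftrightarrow> ((\<lambda>y. (f y - f x) /\<^sub>R (y - x)) \<longlongrightarrow> D) (at x within S)"
    by (simp add: tendsto_norm_zero_iff LIM_zero_iff)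
  finally show ?thesis .
qed

context standing_assumptions
begin

lemma S_bounded_linear: "t \<ge> 0 \<Longrightarrow> bounded_linear (S t)"
  using P3_sg unfolding C0_semigroup_def by blast

lemma S_0: "S 0 x = x"
  using P3_sg unfolding C0_semigroup_def by simp

lemma S_zero: "t \<ge> 0 \<Longrightarrow> S t 0 = 0"
  by (simp add: linear_0 bounded_linear.linear S_bounded_linear)

lemma S_add: "s \<ge> 0 \<Longrightarrow> t \<ge> 0 \<Longrightarrow> S (s + t) x = S s (S t x)"
  using P3_sg unfolding C0_semigroup_def by simp

lemma isCont_S: "t > 0 \<Longrightarrow> isCont (\<lambda>t. S t x) t"
  using P3_sg unfolding C0_semigroup_def by (intro continuous_on_interior[of "{0..}"]) auto

lemma S_diff: "t \<ge> 0 \<Longrightarrow> S t (a - b) = S t a - S t b"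
  by (simp add: linear_diff bounded_linear.linear S_bounded_linear)

lemma S_plus: "t \<ge> 0 \<Longrightarrow> S t (a + b) = S t a + S t b"
  by (simp add: linear_add bounded_linear.linear S_bounded_linear)

lemma S_scaleR: "t \<ge> 0 \<Longrightarrow> S t (c *\<^sub>R a) = c *\<^sub>R S t a"
  by (simp add: linear_scale bounded_linear.linear S_bounded_linear)

lemma j_inv_j_S: "t > 0 \<Longrightarrow> j (inv j (S t g)) = S t g"
  using P5_inv by (simp add: f_inv_into_f)

lemma inv_j_diff: "a \<in> range j \<Longrightarrow> b \<in> range j \<Longrightarrow> inv j (a - b) = inv j a - inv j b"
  using P1_j by (auto simp: linear_diff[symmetric] bounded_linear.linear)

lemma inv_j_S_diff: "r > 0 \<Longrightarrow> inv j (S r (a - b)) = inv j (S r a) - inv j (S r b)"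
  using P5_inv by (simp add: S_diff inv_j_diff)

lemma A_bounded_linear: "bounded_linear A"
proof -
  obtain C where C: "\<And>f. norm (j (i f)) + norm (A f) \<le> C * norm f"
    using P2_equiv by blast
  show ?thesis
  proof (rule bounded_linear_intro[of _ C])
    show "A (x + y) = A x + A y" "A (r *\<^sub>R x) = r *\<^sub>R A x" for x y r
      using P2_lin by (simp_all add: linear_add linear_scale)
    show "norm (A x) \<le> norm x * C" for x
      using C[of x] norm_ge_zero[of "j (i x)"] by (simp add: mult.commute del: norm_ge_zero)
  qed
qed

lemma um_le_const_plus_powr:
  obtains M C where "\<And>r. 0 < r \<Longrightarrow> r \<le> d \<Longrightarrow> um r \<le> M + C * r powr (\<sigma> - 1)"
proof -
  obtain C where "\<forall>\<^sub>F t in at_right 0. um t \<le> C * t powr (\<sigma> - 1)"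
    using P5_sing by blast
  then obtain \<eta> where "\<eta> > 0" and near_0: "\<And>r. 0 < r \<Longrightarrow> r < \<eta> \<Longrightarrow> um r \<le> C * r powr (\<sigma> - 1)"
    unfolding eventually_at_right_field by auto
  have "compact (um ` {\<eta>..d})"
    by (rule compact_continuous_image[OF continuous_on_subset[OF P5_um(1)]]) (use \<open>\<eta> > 0\<close> in auto)
  then obtain M where away_0: "\<And>r. r \<in> {\<eta>..d} \<Longrightarrow> \<bar>um r\<bar> \<le> M"
    using compact_imp_bounded bounded_iff by (metis image_eqI real_norm_def)
  show ?thesis
  proof
    fix r assume "0 < r" "r \<le> d"
    show "um r \<le> max M 0 + max C 0 * r powr (\<sigma> - 1)"
    proof (cases "r < \<eta>")
      case True
      then have "um r \<le> C * r powr (\<sigma> - 1)" using near_0 \<open>0 < r\<close> by blast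
      also have "\<dots> \<le> max C 0 * r powr (\<sigma> - 1)" by (rule mult_right_mono) auto
      finally show ?thesis by simp
    next
      case False
      then show ?thesis using away_0[of r] \<open>r \<le> d\<close> by (simp add: add_increasing2)
    qed
  qed
qed

lemma integrable_um_mult:
  fixes c :: "real \<Rightarrow> real"
  assumes "t0 \<le> t" and c: "continuous_on {t0..t} c"
  shows "(\<lambda>s. um (t - s) * c s) integrable_on {t0..t}"
proof -
  obtain M C where um_le: "\<And>r. 0 < r \<Longrightarrow> r \<le> t - t0 \<Longrightarrow> um r \<le> M + C * r powr (\<sigma> - 1)"
    using um_le_const_plus_powr by blast
  obtain B where B: "\<And>s. s \<in> {t0..t} \<Longrightarrow> \<bar>c s\<bar> \<le> B"
    using compact_imp_bounded[OF compact_continuous_image[OF c compact_Icc]] bounded_iff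
    by (metis image_eqI real_norm_def)
  show ?thesis
  proof (rule integrable_on_Icc_if_continuous_on_Ico_dominated[OF \<open>t0 \<le> t\<close>])
    show "continuous_on {t0..<t} (\<lambda>s. um (t - s) * c s)"
      by (intro continuous_intros continuous_on_compose2[OF P5_um(1)] continuous_on_subset[OF c]) auto
    show "(\<lambda>s. M * B + (C * B) * (t - s) powr (\<sigma> - 1)) integrable_on {t0..t}"
      using integrable_on_cmult_left[OF integrable_on_powr_diff[OF P5_sigma(1) \<open>t0 \<le> t\<close>]]
      by (intro integrable_add integrable_const_ivl) simp
    fix s assume s: "s \<in> {t0..<t}"
    then have "um (t - s) > 0" using P5_um(2) by auto
    then have "norm (um (t - s) * c s) \<le> um (t - s) * B"
      using B[of s] s by (simp add: abs_mult)
    also have "\<dots> \<le> (M + C * (t - s) powr (\<sigma> - 1)) * B"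
      using um_le[of "t - s"] B[of s] s by (intro mult_right_mono) auto
    finally show "norm (um (t - s) * c s) \<le> M * B + (C * B) * (t - s) powr (\<sigma> - 1)"
      by (simp add: algebra_simps)
  qed
qed

lemma integrable_S_convolution:
  fixes g :: "real \<Rightarrow> 'm"
  assumes "t0 \<le> t" and g: "continuous_on {t0..t} g"
  shows "(\<lambda>s. inv j (S (t - s) (g s))) integrable_on {t0..t}"
proof (rule integrable_on_Icc_if_continuous_on_Ico_dominated[OF \<open>t0 \<le> t\<close>])
  have "continuous_on {t0..<t} ((\<lambda>(g, t). inv j (S t g)) \<circ> (\<lambda>s. (g s, t - s)))"
    by (intro continuous_on_compose continuous_intros continuous_on_subset[OF g]
        continuous_on_subset[OF P5_cont]) auto
  then show "continuous_on {t0..<t} (\<lambda>s. inv j (S (t - s) (g s)))" by (simp add: o_def)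
  show "(\<lambda>s. um (t - s) * norm (g s)) integrable_on {t0..t}"
    by (intro integrable_um_mult \<open>t0 \<le> t\<close> continuous_intros g)
  show "norm (inv j (S (t - s) (g s))) \<le> um (t - s) * norm (g s)" if "s \<in> {t0..<t}" for s
    using P5_bound that by auto
qed

lemma S_uniformly_bounded:
  assumes "a > 0"
  obtains B where "\<And>r g. r \<in> {a..b} \<Longrightarrow> norm (S r g) \<le> B * norm g"
proof -
  obtain K where "K > 0" and K: "\<And>x. norm (j x) \<le> norm x * K"
    using bounded_linear.pos_bounded[OF P1_j(1)] by blast
  obtain M where M: "\<And>r. r \<in> {a..b} \<Longrightarrow> \<bar>um r\<bar> \<le> M"
    using compact_imp_bounded[OF compact_continuous_image[OF
          continuous_on_subset[OF P5_um(1)] compact_Icc]] \<open>a > 0\<close> bounded_iff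
    by (metis atLeastAtMost_iff greaterThan_iff image_eqI less_le_trans real_norm_def subsetI)
  have "norm (S r g) \<le> M * K * norm g" if r: "r \<in> {a..b}" for r g
  proof -
    have "r > 0" using r \<open>a > 0\<close> by auto
    then have "norm (S r g) \<le> norm (inv j (S r g)) * K"
      using K j_inv_j_S by metis
    also have "\<dots> \<le> (M * norm g) * K"
      using P5_bound \<open>r > 0\<close> M[OF r] \<open>K > 0\<close>
      by (intro mult_right_mono order.trans[OF _ mult_right_mono[of "um r" M]]) auto
    finally show ?thesis by (simp add: ac_simps)
  qed
  then show ?thesis using that by blast
qed

lemma S_tendsto_zero:
  assumes "\<tau> > 0" and "(q \<longlongrightarrow> 0) F" and "\<forall>\<^sub>F h in F. r h \<in> {\<tau>/2..2*\<tau>}"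
  shows "((\<lambda>h. S (r h) (q h)) \<longlongrightarrow> 0) F"
proof -
  obtain B where B: "\<And>r g. r \<in> {\<tau>/2..2*\<tau>} \<Longrightarrow> norm (S r g) \<le> B * norm g"
    using S_uniformly_bounded[of "\<tau>/2"] \<open>\<tau> > 0\<close> by auto
  show ?thesis
  proof (rule Lim_null_comparison)
    show "\<forall>\<^sub>F h in F. norm (S (r h) (q h)) \<le> B * norm (q h)"
      using assms(3) by eventually_elim (use B in blast)
    show "((\<lambda>h. B * norm (q h)) \<longlongrightarrow> 0) F"
      using tendsto_mult_right_zero[OF tendsto_norm_zero[OF assms(2)]] .
  qed
qed

lemma S_difference_quotient:
  assumes "\<tau> > 0" "r > 0" "r \<noteq> \<tau>"
  shows "(S r x - S \<tau> x) /\<^sub>R (r - \<tau>) = S (min r \<tau>) ((S \<bar>r - \<tau>\<bar> x - x) /\<^sub>R \<bar>r - \<tau>\<bar>)"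
proof (cases "r < \<tau>")
  case True
  have "S r x - S \<tau> x = S r (x - S (\<tau> - r) x)"
    using S_add[of r "\<tau> - r" x] S_diff[of r] True assms by simp
  also have "\<dots> = (r - \<tau>) *\<^sub>R S r ((S (\<tau> - r) x - x) /\<^sub>R (\<tau> - r))"
  proof -
    have "(r - \<tau>) * inverse (\<tau> - r) = - 1" using True by (simp add: field_simps)
    then show ?thesis using assms by (simp add: S_scaleR[symmetric])
  qed
  finally show ?thesis using True by simp
next
  case False
  have "S r x - S \<tau> x = S \<tau> (S (r - \<tau>) x - x)"
    using S_add[of \<tau> "r - \<tau>" x] S_diff[of \<tau>] False assms by simp
  also have "\<dots> = (r - \<tau>) *\<^sub>R S \<tau> ((S (r - \<tau>) x - x) /\<^sub>R (r - \<tau>))"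
    using False assms by (simp add: S_scaleR[symmetric])
  finally show ?thesis using False assms by simp
qed

text \<open>On both sides of \<open>\<tau>\<close> the difference quotient is \<open>S (min r \<tau>)\<close> applied to a
  difference quotient at \<open>0\<close>; the uniform bound on \<open>S\<close> away from \<open>0\<close> handles the left side.\<close>
lemma has_vector_derivative_S_orbit:
  assumes "\<tau> > 0"
  shows "((\<lambda>r. S r (j (i p))) has_vector_derivative S \<tau> (A p)) (at \<tau>)"
proof -
  define x where "x = j (i p)"
  define q where "q = (\<lambda>h. (S h x - x) /\<^sub>R h)"
  have q: "(q \<longlongrightarrow> A p) (at_right 0)"
    unfolding q_def x_def using P3_gen by blast
  have "((\<lambda>r. S (min r \<tau>) (q \<bar>r - \<tau>\<bar> - A p) + S (min r \<tau>) (A p)) \<longlongrightarrow> 0 + S \<tau> (A p)) (at \<tau>)"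
  proof (rule tendsto_add)
    have "((\<lambda>r. \<bar>r - \<tau>\<bar>) \<longlongrightarrow> \<bar>\<tau> - \<tau>\<bar>) (at \<tau>)"
      by (intro tendsto_intros)
    then have "filterlim (\<lambda>r. \<bar>r - \<tau>\<bar>) (at_right 0) (at \<tau>)"
      by (auto simp: filterlim_at eventually_at_filter)
    then have "((\<lambda>r. q \<bar>r - \<tau>\<bar> - A p) \<longlongrightarrow> 0) (at \<tau>)"
      using LIM_zero[OF filterlim_compose[OF q]] by blast
    moreover have "\<forall>\<^sub>F r in at \<tau>. min r \<tau> \<in> {\<tau>/2..2*\<tau>}"
      unfolding eventually_at
      by (rule exI[of _ "\<tau>/2"]) (use \<open>\<tau> > 0\<close> in \<open>auto simp: dist_real_def split: abs_split\<close>)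
    ultimately show "((\<lambda>r. S (min r \<tau>) (q \<bar>r - \<tau>\<bar> - A p)) \<longlongrightarrow> 0) (at \<tau>)"
      by (rule S_tendsto_zero[OF \<open>\<tau> > 0\<close>])
    have "((\<lambda>r. min r \<tau>) \<longlongrightarrow> min \<tau> \<tau>) (at \<tau>)" by (intro tendsto_intros)
    then show "((\<lambda>r. S (min r \<tau>) (A p)) \<longlongrightarrow> S \<tau> (A p)) (at \<tau>)"
      using isCont_tendsto_compose[OF isCont_S[OF \<open>\<tau> > 0\<close>]] by simp
  qed
  moreover have "\<forall>\<^sub>F r in at \<tau>. S (min r \<tau>) (q \<bar>r - \<tau>\<bar> - A p) + S (min r \<tau>) (A p) =
      (S r x - S \<tau> x) /\<^sub>R (r - \<tau>)"
    unfolding eventually_at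
  proof (intro exI[of _ \<tau>] conjI ballI impI)
    fix r assume "r \<in> UNIV" "r \<noteq> \<tau> \<and> dist r \<tau> < \<tau>"
    then have "r > 0" "r \<noteq> \<tau>" by (auto simp: dist_real_def)
    then show "S (min r \<tau>) (q \<bar>r - \<tau>\<bar> - A p) + S (min r \<tau>) (A p) = (S r x - S \<tau> x) /\<^sub>R (r - \<tau>)"
      using \<open>\<tau> > 0\<close> by (simp add: q_def S_difference_quotient S_plus[symmetric])
  qed (fact \<open>\<tau> > 0\<close>)
  ultimately have "((\<lambda>r. (S r x - S \<tau> x) /\<^sub>R (r - \<tau>)) \<longlongrightarrow> S \<tau> (A p)) (at \<tau>)"
    by (simp add: tendsto_cong)
  then show ?thesis
    unfolding has_vector_derivative_iff_difference_quotient x_def .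
qed

text \<open>Split \<open>x s = x s0 + (x s - x s0)\<close>: the first part is a fixed domain element on the
  orbit, the second vanishes at \<open>s0\<close> and is hit by a uniformly bounded \<open>S (t - s)\<close>.\<close>
lemma has_vector_derivative_S_backward:
  fixes x :: "real \<Rightarrow> 'm"
  assumes "s0 < t" and x_s0: "x s0 = j (i p)" and x': "(x has_vector_derivative w) (at s0)"
  shows "((\<lambda>s. S (t - s) (x s)) has_vector_derivative S (t - s0) (w - A p)) (at s0)"
proof -
  define \<tau> where "\<tau> = t - s0"
  have "\<tau> > 0" using \<open>s0 < t\<close> unfolding \<tau>_def by simp
  have near_s0: "\<forall>\<^sub>F s in at s0. t - s \<in> {\<tau>/2..2*\<tau>}"
    unfolding eventually_at
    by (rule exI[of _ "\<tau>/2"]) (use \<open>\<tau> > 0\<close> in \<open>auto simp: dist_real_def \<tau>_def split: abs_split\<close>)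
  have "((\<lambda>s. t - s) has_vector_derivative - 1) (at s0)"
    by (auto intro!: derivative_eq_intros)
  from vector_diff_chain_at[OF this, of "\<lambda>r. S r (x s0)"]
  have fixed: "((\<lambda>s. S (t - s) (x s0)) has_vector_derivative - S \<tau> (A p)) (at s0)"
    using has_vector_derivative_S_orbit[OF \<open>\<tau> > 0\<close>, of p] x_s0 by (simp add: o_def \<tau>_def)
  define Q where "Q = (\<lambda>s. (x s - x s0) /\<^sub>R (s - s0))"
  have Q: "(Q \<longlongrightarrow> w) (at s0)"
    using x' unfolding has_vector_derivative_iff_difference_quotient Q_def .
  have "((\<lambda>s. S (t - s) (Q s - w) + S (t - s) w) \<longlongrightarrow> 0 + S \<tau> w) (at s0)"
  proof (rule tendsto_add)
    show "((\<lambda>s. S (t - s) (Q s - w)) \<longlongrightarrow> 0) (at s0)"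
      by (rule S_tendsto_zero[OF \<open>\<tau> > 0\<close> LIM_zero[OF Q] near_s0])
    have "((\<lambda>s. t - s) \<longlongrightarrow> \<tau>) (at s0)"
      unfolding \<tau>_def by (intro tendsto_intros)
    then show "((\<lambda>s. S (t - s) w) \<longlongrightarrow> S \<tau> w) (at s0)"
      by (rule isCont_tendsto_compose[OF isCont_S[OF \<open>\<tau> > 0\<close>]])
  qed
  moreover have "\<forall>\<^sub>F s in at s0. S (t - s) (Q s - w) + S (t - s) w =
      (S (t - s) (x s - x s0) - S (t - s0) (x s0 - x s0)) /\<^sub>R (s - s0)"
    using near_s0 by eventually_elim (use \<open>s0 < t\<close> in \<open>simp add: Q_def S_plus[symmetric] S_scaleR S_zero\<close>)
  ultimately have moving: "((\<lambda>s. S (t - s) (x s - x s0)) has_vector_derivative S \<tau> w) (at s0)"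
    unfolding has_vector_derivative_iff_difference_quotient by (simp add: tendsto_cong)
  have "((\<lambda>s. S (t - s) (x s0) + S (t - s) (x s - x s0)) has_vector_derivative
      S (t - s0) (w - A p)) (at s0)"
    using has_vector_derivative_add[OF fixed moving] \<open>\<tau> > 0\<close> by (simp add: S_diff \<tau>_def)
  then show ?thesis
    by (rule has_vector_derivative_transform_within_open[of _ _ _ "{..<t}"])
      (use \<open>s0 < t\<close> in \<open>auto simp: S_plus[symmetric]\<close>)
qed

lemma continuous_on_S_backward:
  fixes x :: "real \<Rightarrow> 'f"
  assumes "continuous_on {t0..t} x"
  shows "continuous_on {t0..t} (\<lambda>s. S (t - s) (j (x s)))"
proof -
  have "continuous_on {t0..t} ((\<lambda>(f, t). inv j (S t (j f))) \<circ> (\<lambda>s. (x s, t - s)))"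
  proof (rule continuous_on_compose)
    show "continuous_on {t0..t} (\<lambda>s. (x s, t - s))"
      by (intro continuous_intros assms)
    show "continuous_on ((\<lambda>s. (x s, t - s)) ` {t0..t}) (\<lambda>(f, t). inv j (S t (j f)))"
      by (rule continuous_on_subset[OF P4_cont]) auto
  qed
  then have "continuous_on {t0..t} (\<lambda>s. j (inv j (S (t - s) (j (x s)))))"
    by (intro bounded_linear.continuous_on[OF P1_j(1)]) (simp add: o_def)
  moreover have "j (inv j (S (t - s) (j (x s)))) = S (t - s) (j (x s))" if "s \<in> {t0..t}" for s
    using P4_inv that by (simp add: f_inv_into_f)
  ultimately show ?thesis by (rule continuous_on_cong[THEN iffD1, OF refl, rotated])
qed

lemma continuous_on_P_graph:
  fixes x :: "real \<Rightarrow> 'f"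
  assumes "compact K" and x: "continuous_on K x" and graph: "\<And>s. s \<in> K \<Longrightarrow> (x s, s) \<in> DomP"
  shows "continuous_on K (\<lambda>s. P (x s) s)"
proof -
  define C where "C = (\<lambda>s. (x s, s)) ` K"
  have "compact C"
    unfolding C_def by (intro compact_continuous_image continuous_intros x \<open>compact K\<close>)
  moreover have "C \<subseteq> DomP"
    using graph by (auto simp: C_def)
  ultimately obtain L M where LM: "\<forall>(f, t) \<in> C. \<forall>(f', t') \<in> C.
      norm (P f t - P f' t') \<le> L * norm (f - f') + M * \<bar>t - t'\<bar>"
    using P6_lip compact_imp_closed compact_imp_bounded by meson
  have lip: "norm (P (x s') s' - P (x s) s) \<le> L * norm (x s' - x s) + M * \<bar>s' - s\<bar>"
    if "s \<in> K" "s' \<in> K" for s s'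
  proof -
    have "(x s, s) \<in> C" "(x s', s') \<in> C" using that unfolding C_def by auto
    then show ?thesis using LM by fastforce
  qed
  show ?thesis
    unfolding continuous_on_def
  proof
    fix s assume "s \<in> K"
    have "((\<lambda>s'. L * norm (x s' - x s) + M * \<bar>s' - s\<bar>) \<longlongrightarrow> L * norm (x s - x s) + M * \<bar>s - s\<bar>) (at s within K)"
      using x \<open>s \<in> K\<close> unfolding continuous_on_def by (intro tendsto_intros) auto
    then have "((\<lambda>s'. L * norm (x s' - x s) + M * \<bar>s' - s\<bar>) \<longlongrightarrow> 0) (at s within K)"
      by simp
    moreover have "\<forall>\<^sub>F s' in at s within K.
        norm (P (x s') s' - P (x s) s) \<le> L * norm (x s' - x s) + M * \<bar>s' - s\<bar>"
      unfolding eventually_at_filter by (rule always_eventually) (use lip \<open>s \<in> K\<close> in blast)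
    ultimately have "((\<lambda>s'. P (x s') s' - P (x s) s) \<longlongrightarrow> 0) (at s within K)"
      by (rule Lim_null_comparison[rotated])
    then show "((\<lambda>s'. P (x s') s') \<longlongrightarrow> P (x s) s) (at s within K)"
      by (simp add: LIM_zero_iff)
  qed
qed

lemma integral_S_linear_defect:
  fixes \<phi> :: "real \<Rightarrow> 'p" and \<phi>' :: "real \<Rightarrow> 'm"
  assumes "t0 \<le> t" and \<phi>: "continuous_on {t0..t} \<phi>" and \<phi>': "continuous_on {t0..t} \<phi>'"
    and deriv: "\<forall>s \<in> {t0..t}. ((\<lambda>s. j (i (\<phi> s))) has_vector_derivative \<phi>' s) (at s within {t0..t})"
  shows "integral {t0..t} (\<lambda>s. inv j (S (t - s) (\<phi>' s - A (\<phi> s))))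
    = i (\<phi> t) - inv j (S (t - t0) (j (i (\<phi> t0))))"
proof -
  define F where "F = (\<lambda>s. S (t - s) (j (i (\<phi> s))))"
  let ?g = "\<lambda>s. inv j (S (t - s) (\<phi>' s - A (\<phi> s)))"
  have "((\<lambda>s. S (t - s) (\<phi>' s - A (\<phi> s))) has_integral (F t - F t0)) {t0..t}"
  proof (rule fundamental_theorem_of_calculus_interior[OF \<open>t0 \<le> t\<close>])
    show "continuous_on {t0..t} F"
      unfolding F_def by (intro continuous_on_S_backward bounded_linear.continuous_on[OF P1_i(1) \<phi>])
    fix s assume s: "s \<in> {t0<..<t}"
    have "at s within {t0..t} = at s"
      using s by (simp add: at_within_Icc_at)
    then have x': "((\<lambda>s. j (i (\<phi> s))) has_vector_derivative \<phi>' s) (at s)"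
      using deriv s by (metis greaterThanLessThan_subseteq_atLeastAtMost_iff order_refl subsetD)
    show "(F has_vector_derivative S (t - s) (\<phi>' s - A (\<phi> s))) (at s)"
      unfolding F_def by (rule has_vector_derivative_S_backward[OF _ refl x']) (use s in auto)
  qed
  moreover have "F t - F t0 = j (i (\<phi> t) - inv j (S (t - t0) (j (i (\<phi> t0)))))"
    using P4_inv \<open>t0 \<le> t\<close>
    by (simp add: F_def S_0 f_inv_into_f linear_diff bounded_linear.linear[OF P1_j(1)])
  moreover have "((\<lambda>s. S (t - s) (\<phi>' s - A (\<phi> s))) has_integral j (integral {t0..t} ?g)) {t0<..<t}"
  proof -
    have "?g integrable_on {t0..t}"
      by (intro integrable_S_convolution \<open>t0 \<le> t\<close> continuous_intros \<phi>'
          bounded_linear.continuous_on[OF A_bounded_linear \<phi>])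
    then have "((j \<circ> ?g) has_integral j (integral {t0..t} ?g)) {t0<..<t}"
      using has_integral_linear[OF integrable_integral P1_j(1)] has_integral_Icc_iff_Ioo by blast
    then show ?thesis
      by (rule has_integral_cong[THEN iffD1, rotated]) (simp add: j_inv_j_S)
  qed
  ultimately have "j (integral {t0..t} ?g) = j (i (\<phi> t) - inv j (S (t - t0) (j (i (\<phi> t0)))))"
    unfolding has_integral_Icc_iff_Ioo by (metis has_integral_unique)
  then show ?thesis
    using P1_j(2) by (simp add: inj_eq)
qed

text \<open>The approximate solution \<open>\<phi>\<^sub>a\<^sub>p \<in> C(J, F\<^sub>+) \<inter> C\<^sup>1(J, F\<^sub>-)\<close> of the paper, with its
  derivative in \<open>F\<^sub>-\<close> given explicitly as \<open>\<phi>'\<close>.\<close>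
definition approx_solution_on :: "real set \<Rightarrow> (real \<Rightarrow> 'p) \<Rightarrow> (real \<Rightarrow> 'm) \<Rightarrow> bool" where
  "approx_solution_on J \<phi> \<phi>' \<longleftrightarrow> continuous_on J \<phi> \<and> continuous_on J \<phi>' \<and>
     (\<forall>s \<in> J. ((\<lambda>s. j (i (\<phi> s))) has_vector_derivative \<phi>' s) (at s within J)) \<and>
     (\<forall>s \<in> J. (i (\<phi> s), s) \<in> DomP)"

lemma approx_solution_on_subset:
  "approx_solution_on J \<phi> \<phi>' \<Longrightarrow> J' \<subseteq> J \<Longrightarrow> approx_solution_on J' \<phi> \<phi>'"
  unfolding approx_solution_on_def
  by (auto intro: continuous_on_subset has_vector_derivative_within_subset)

lemma variation_of_constants:
  fixes \<phi> :: "real \<Rightarrow> 'p" and \<phi>' :: "real \<Rightarrow> 'm"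
  assumes "t0 \<le> t" and sol: "approx_solution_on {t0..t} \<phi> \<phi>'"
  shows "(\<lambda>s. inv j (S (t - s) (P (i (\<phi> s)) s))) integrable_on {t0..t} \<and>
    (\<lambda>s. inv j (S (t - s) (\<phi>' s - A (\<phi> s) - P (i (\<phi> s)) s))) integrable_on {t0..t} \<and>
    i (\<phi> t) - inv j (S (t - t0) (j f0)) - integral {t0..t} (\<lambda>s. inv j (S (t - s) (P (i (\<phi> s)) s)))
      = inv j (S (t - t0) (j (i (\<phi> t0) - f0)))
        + integral {t0..t} (\<lambda>s. inv j (S (t - s) (\<phi>' s - A (\<phi> s) - P (i (\<phi> s)) s)))"
proof -
  let ?D = "\<lambda>s. \<phi>' s - A (\<phi> s)" and ?P = "\<lambda>s. P (i (\<phi> s)) s"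
  have \<phi>: "continuous_on {t0..t} \<phi>" and \<phi>': "continuous_on {t0..t} \<phi>'"
    and deriv: "\<forall>s \<in> {t0..t}. ((\<lambda>s. j (i (\<phi> s))) has_vector_derivative \<phi>' s) (at s within {t0..t})"
    and graph: "\<forall>s \<in> {t0..t}. (i (\<phi> s), s) \<in> DomP"
    using sol unfolding approx_solution_on_def by blast+
  have D: "continuous_on {t0..t} ?D"
    by (intro continuous_intros \<phi>' bounded_linear.continuous_on[OF A_bounded_linear \<phi>])
  have P: "continuous_on {t0..t} ?P"
    using graph by (intro continuous_on_P_graph bounded_linear.continuous_on[OF P1_i(1) \<phi>]) auto
  have int_D: "(\<lambda>s. inv j (S (t - s) (?D s))) integrable_on {t0..t}"
    and int_P: "(\<lambda>s. inv j (S (t - s) (?P s))) integrable_on {t0..t}"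
    and int_e: "(\<lambda>s. inv j (S (t - s) (?D s - ?P s))) integrable_on {t0..t}"
    by (intro integrable_S_convolution \<open>t0 \<le> t\<close> D P continuous_intros)+
  have "integral {t0..t} (\<lambda>s. inv j (S (t - s) (?D s - ?P s)))
      = integral {t0..t} (\<lambda>s. inv j (S (t - s) (?D s)) - inv j (S (t - s) (?P s)))"
    unfolding integral_open_interval_real
    by (rule integral_cong) (simp add: inv_j_S_diff)
  also have "\<dots> = integral {t0..t} (\<lambda>s. inv j (S (t - s) (?D s))) - integral {t0..t} (\<lambda>s. inv j (S (t - s) (?P s)))"
    by (rule integral_diff[OF int_D int_P])
  finally have "integral {t0..t} (\<lambda>s. inv j (S (t - s) (?D s - ?P s))) = \<dots>" .
  moreover have "inv j (S (t - t0) (j (i (\<phi> t0) - f0)))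
      = inv j (S (t - t0) (j (i (\<phi> t0)))) - inv j (S (t - t0) (j f0))"
    using P4_inv \<open>t0 \<le> t\<close>
    by (simp add: S_diff inv_j_diff linear_diff bounded_linear.linear[OF P1_j(1)])
  ultimately show ?thesis
    using int_P int_e integral_S_linear_defect[OF \<open>t0 \<le> t\<close> \<phi> \<phi>' deriv] by simp
qed

lemma norm_integral_error_le:
  fixes \<phi> :: "real \<Rightarrow> 'p" and \<phi>' :: "real \<Rightarrow> 'm"
  assumes "t0 \<le> t" and sol: "approx_solution_on {t0..t} \<phi> \<phi>'"
    and d: "norm (i (\<phi> t0) - f0) \<le> \<delta>" and \<epsilon>: "continuous_on {t0..t} \<epsilon>"
    and e: "\<forall>s \<in> {t0..t}. norm (\<phi>' s - A (\<phi> s) - P (i (\<phi> s)) s) \<le> \<epsilon> s"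
  shows "(\<lambda>s. um (t - s) * \<epsilon> s) integrable_on {t0..t} \<and>
    norm (i (\<phi> t) - inv j (S (t - t0) (j f0))
        - integral {t0..t} (\<lambda>s. inv j (S (t - s) (P (i (\<phi> s)) s))))
      \<le> u (t - t0) * \<delta> + integral {t0..t} (\<lambda>s. um (t - s) * \<epsilon> s)"
proof -
  let ?e = "\<lambda>s. inv j (S (t - s) (\<phi>' s - A (\<phi> s) - P (i (\<phi> s)) s))"
  have int_um: "(\<lambda>s. um (t - s) * \<epsilon> s) integrable_on {t0..t}"
    by (rule integrable_um_mult[OF \<open>t0 \<le> t\<close> \<epsilon>])
  have "norm (integral {t0<..<t} ?e) \<le> integral {t0<..<t} (\<lambda>s. um (t - s) * \<epsilon> s)"
  proof (rule integral_norm_bound_integral)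
    show "?e integrable_on {t0<..<t}"
      using variation_of_constants[OF \<open>t0 \<le> t\<close> sol] integrable_on_open_interval_real by blast
    show "(\<lambda>s. um (t - s) * \<epsilon> s) integrable_on {t0<..<t}"
      using int_um integrable_on_open_interval_real by blast
    fix s assume s: "s \<in> {t0<..<t}"
    then have "norm (?e s) \<le> um (t - s) * norm (\<phi>' s - A (\<phi> s) - P (i (\<phi> s)) s)"
      using P5_bound by simp
    also have "\<dots> \<le> um (t - s) * \<epsilon> s"
      using e s P5_um(2) by (intro mult_left_mono) (auto intro: less_imp_le)
    finally show "norm (?e s) \<le> um (t - s) * \<epsilon> s" .
  qed
  moreover have "norm (inv j (S (t - t0) (j (i (\<phi> t0) - f0)))) \<le> u (t - t0) * norm (i (\<phi> t0) - f0)"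
    using P4_bound \<open>t0 \<le> t\<close> by simp
  moreover have "\<dots> \<le> u (t - t0) * \<delta>"
    using d P4_u(2) \<open>t0 \<le> t\<close> by (intro mult_left_mono) (auto intro: less_imp_le)
  ultimately have bound: "norm (inv j (S (t - t0) (j (i (\<phi> t0) - f0)))) + norm (integral {t0..t} ?e)
      \<le> u (t - t0) * \<delta> + integral {t0..t} (\<lambda>s. um (t - s) * \<epsilon> s)"
    unfolding integral_open_interval_real[symmetric] by linarith
  have "i (\<phi> t) - inv j (S (t - t0) (j f0)) - integral {t0..t} (\<lambda>s. inv j (S (t - s) (P (i (\<phi> s)) s)))
      = inv j (S (t - t0) (j (i (\<phi> t0) - f0))) + integral {t0..t} ?e"
    using variation_of_constants[OF \<open>t0 \<le> t\<close> sol] by blast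
  then show ?thesis
    using int_um bound norm_triangle_ineq[of "inv j (S (t - t0) (j (i (\<phi> t0) - f0)))" "integral {t0..t} ?e"]
    by simp
qed

end

theorem lemma3p4:
  fixes i :: "'p::banach \<Rightarrow> 'f::banach"
    and j :: "'f \<Rightarrow> 'm::banach"
    and A :: "'p \<Rightarrow> 'm"
    and S :: "real \<Rightarrow> 'm \<Rightarrow> 'm"
    and u um :: "real \<Rightarrow> real"
    and \<sigma> :: real
    and P :: "'f \<Rightarrow> real \<Rightarrow> 'm"
    and DomP :: "('f \<times> real) set"
    and f0 :: 'f and t0 :: real and T :: ereal
    and \<phi> :: "real \<Rightarrow> 'p" and \<phi>' :: "real \<Rightarrow> 'm"
  assumes std: "standing_assumptions i j A S u um \<sigma> P DomP"
    and init: "(f0, t0) \<in> DomP" "f0 \<in> range i"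
    and T: "ereal t0 < T"
    and phi_cont: "continuous_on {t. t0 \<le> t \<and> ereal t < T} \<phi>"
    and phi_deriv: "\<forall>t \<in> {t. t0 \<le> t \<and> ereal t < T}.
           ((\<lambda>s. j (i (\<phi> s))) has_vector_derivative \<phi>' t) (at t within {t. t0 \<le> t \<and> ereal t < T})"
    and phi'_cont: "continuous_on {t. t0 \<le> t \<and> ereal t < T} \<phi>'"
    and graph: "\<forall>t \<in> {t. t0 \<le> t \<and> ereal t < T}. (i (\<phi> t), t) \<in> DomP"
  shows
    "continuous_on {t. t0 \<le> t \<and> ereal t < T} (\<lambda>t. i (\<phi> t)) \<and>
     (\<forall>t \<in> {t. t0 \<le> t \<and> ereal t < T}.
        (\<lambda>s. inv j (S (t - s) (P (i (\<phi> s)) s))) integrable_on {t0..t} \<and>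
        (\<lambda>s. inv j (S (t - s) (\<phi>' s - A (\<phi> s) - P (i (\<phi> s)) s))) integrable_on {t0..t} \<and>
        i (\<phi> t) - inv j (S (t - t0) (j f0))
          - integral {t0..t} (\<lambda>s. inv j (S (t - s) (P (i (\<phi> s)) s)))
        = inv j (S (t - t0) (j (i (\<phi> t0) - f0)))
          + integral {t0..t} (\<lambda>s. inv j (S (t - s) (\<phi>' s - A (\<phi> s) - P (i (\<phi> s)) s)))) \<and>
     (\<forall>\<delta> \<epsilon>. \<delta> \<ge> 0 \<and> norm (i (\<phi> t0) - f0) \<le> \<delta> \<and>
        continuous_on {t. t0 \<le> t \<and> ereal t < T} \<epsilon> \<and>
        (\<forall>t \<in> {t. t0 \<le> t \<and> ereal t < T}. 0 \<le> \<epsilon> t \<and>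
            norm (\<phi>' t - A (\<phi> t) - P (i (\<phi> t)) t) \<le> \<epsilon> t) \<longrightarrow>
        (\<forall>t \<in> {t. t0 \<le> t \<and> ereal t < T}.
           (\<lambda>s. um (t - s) * \<epsilon> s) integrable_on {t0..t} \<and>
           norm (i (\<phi> t) - inv j (S (t - t0) (j f0))
                 - integral {t0..t} (\<lambda>s. inv j (S (t - s) (P (i (\<phi> s)) s))))
             \<le> u (t - t0) * \<delta> + integral {t0..t} (\<lambda>s. um (t - s) * \<epsilon> s)))"
proof -
  interpret standing_assumptions i j A S u um \<sigma> P DomP by (fact std)
  define I where "I = {t. t0 \<le> t \<and> ereal t < T}"
  have sol: "approx_solution_on I \<phi> \<phi>'"
    unfolding approx_solution_on_def I_def using phi_cont phi_deriv phi'_cont graph by blast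
  have sub: "t0 \<le> t" "{t0..t} \<subseteq> I" if "t \<in> I" for t
    using that unfolding I_def by (auto intro: le_less_trans[of _ "ereal t"])
  have sol_t: "approx_solution_on {t0..t} \<phi> \<phi>'" if "t \<in> I" for t
    using approx_solution_on_subset[OF sol sub(2)[OF that]] .
  show ?thesis
    unfolding I_def[symmetric]
  proof (intro conjI ballI allI impI)
    show "continuous_on I (\<lambda>t. i (\<phi> t))"
      using bounded_linear.continuous_on[OF P1_i(1) phi_cont] unfolding I_def .
  qed (use variation_of_constants[OF sub(1) sol_t] norm_integral_error_le[OF sub(1) sol_t] sub(2)
      in \<open>blast intro: continuous_on_subset\<close>)+
qed

end
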